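(* Let $0\le a<b<1$ and let $\varrho\ge0$ be a bounded function on $[a,b]$ such that $\varrho/\zeta$ is non-decreasing on $[a,b]$. Then (i) $m(\varrho/\zeta,a,b)\le(\varrho/\zeta)(b-)+m(a,b)$, where $(\varrho/\zeta)(b-)=\lim_{t\uparrow b}\varrho(t)/\zeta(t)$; (ii) equality holds in (i) if and only if $\varrho\equiv0$ on $[a,b)$.
   Context: $\zeta(t)=\frac{2}{1-t^2}$ on $[0,1)$. With $h$ a primitive of $\varrho$ on $[a,b]$, $\psi=e^h$, $\mathtt f(x)=x\zeta(x)^2\psi(x)$, $\mathtt g(x)=x\zeta(x)\psi(x)$, define $m(\varrho/\zeta,a,b):=\frac{\mathtt g(b)-\mathtt g(a)}{\int_a^b\mathtt f\,dt}$, and $m(a,b):=m(0,a,b)=\frac{b\zeta(b)-a\zeta(a)}{\zeta(b)-\zeta(a)}=\frac{1+ab}{a+b}$ (the value for $\varrho\equiv0$). *)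

theory Defs
  imports "HOL-Analysis.Analysis"
begin

definition zeta :: "real \<Rightarrow> real" where
  "zeta t = 2 / (1 - t\<^sup>2)"

definition m0 :: "real \<Rightarrow> real \<Rightarrow> real" where
  "m0 a b = (b * zeta b - a * zeta a) / (zeta b - zeta a)"

text \<open>m(rho/zeta,a,b), with the primitive h x = integral of rho over [a,x]
  (the choice of primitive does not affect the quotient).\<close>
definition m_rho :: "(real \<Rightarrow> real) \<Rightarrow> real \<Rightarrow> real \<Rightarrow> real" where
  "m_rho rho a b =
    (let h = (\<lambda>x. integral {a..x} rho);
         psi = (\<lambda>x. exp (h x));
         f = (\<lambda>x. x * (zeta x)\<^sup>2 * psi x);
         g = (\<lambda>x. x * zeta x * psi x)
     in (g b - g a) / integral {a..b} f)"

end

theory Submission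
  imports Defs
begin

text \<open>
  Put \<open>r = \<rho>/\<zeta>\<close>, \<open>L = r(b-)\<close>, \<open>M = m(a,b)\<close> and \<open>u(x) = x \<zeta>(x)\<close>, so that \<open>\<zeta>' = x \<zeta>\<^sup>2\<close>
  and \<open>f = \<zeta>' \<psi>\<close>. Since \<open>\<rho> = \<zeta> r\<close> is nondecreasing, \<open>\<psi>' = \<rho> \<psi>\<close> off a countable set, and
  \<open>g(b) - g(a) = \<integral> u' \<psi> + \<integral> f r\<close> with \<open>\<integral> f r \<le> L \<integral> f\<close>. The kernel
  \<open>k = u' - M \<zeta>' = \<zeta>\<^sup>2 (x\<^sup>2 - 2 M x + 1) / 2\<close> has integral \<open>0\<close> over \<open>[a,b]\<close> by the
  choice of \<open>M\<close>, and changes sign from \<open>+\<close> to \<open>-\<close> at a root \<open>c \<in> (a,b)\<close>; as \<open>\<psi>\<close> is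
  nondecreasing, \<open>\<integral> k \<psi> = \<integral> k (\<psi> - \<psi>(c)) \<le> 0\<close>. Hence \<open>g(b) - g(a) \<le> (L + M) \<integral> f\<close>.
  If \<open>\<rho>\<close> does not vanish on \<open>[a,b)\<close>, then \<open>\<psi>(c) < \<psi>(b)\<close> and the last inequality for
  \<open>\<integral> k \<psi>\<close> is strict; if it does, then \<open>\<psi> = 1\<close>, \<open>L = 0\<close> and all inequalities are equalities.
\<close>

lemma zeta_pos: "\<bar>t\<bar> < 1 \<Longrightarrow> 0 < zeta t"
  by (simp add: zeta_def abs_square_less_1)

lemma zeta_mult_one_minus_square: "\<bar>t\<bar> < 1 \<Longrightarrow> zeta t * (1 - t\<^sup>2) = 2"
proof -
  assume "\<bar>t\<bar> < 1"
  then have "1 - t\<^sup>2 \<noteq> 0"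
    by (simp flip: abs_square_less_1)
  then show ?thesis
    by (simp add: zeta_def field_simps)
qed

lemma zeta_strict_mono:
  assumes "0 \<le> x" "x < y" "y < 1"
  shows "zeta x < zeta y"
proof -
  have "x\<^sup>2 < y\<^sup>2" "y\<^sup>2 < 1"
    using assms by (auto intro: power_strict_mono simp: abs_square_less_1)
  then show ?thesis
    unfolding zeta_def by (intro divide_strict_left_mono) auto
qed

lemma zeta_mono: "0 \<le> x \<Longrightarrow> x \<le> y \<Longrightarrow> y < 1 \<Longrightarrow> zeta x \<le> zeta y"
  using zeta_strict_mono[of x y] by (cases "x = y") auto

lemma has_real_derivative_zeta:
  assumes "\<bar>t\<bar> < 1"
  shows "(zeta has_real_derivative t * (zeta t)\<^sup>2) (at t)"
proof -
  have "1 - t * t \<noteq> 0"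
    using assms by (simp flip: abs_square_less_1 power2_eq_square)
  then show ?thesis
    unfolding zeta_def
    by (auto intro!: derivative_eq_intros simp: field_simps power2_eq_square)
qed

lemma continuous_on_zeta: "0 \<le> a \<Longrightarrow> b < 1 \<Longrightarrow> continuous_on {a..b} zeta"
  by (intro continuous_at_imp_continuous_on ballI DERIV_isCont[OF has_real_derivative_zeta]) auto

lemma m0_eq:
  assumes "0 \<le> a" "a < b" "b < 1"
  shows "m0 a b = (1 + a * b) / (a + b)"
proof -
  define P where "P = (1 - a\<^sup>2) * (1 - b\<^sup>2)"
  have "a\<^sup>2 < b\<^sup>2" "b\<^sup>2 < 1"
    using assms power_strict_mono[of a b 2] power_strict_mono[of b 1 2] by auto
  then have nz: "1 - a\<^sup>2 \<noteq> 0" "1 - b\<^sup>2 \<noteq> 0" and P: "P \<noteq> 0"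
    by (auto simp: P_def)
  have num: "b * zeta b - a * zeta a = 2 * (b * (1 - a\<^sup>2) - a * (1 - b\<^sup>2)) / P"
    using nz by (simp add: P_def zeta_def field_simps)
  have den: "zeta b - zeta a = 2 * ((1 - a\<^sup>2) - (1 - b\<^sup>2)) / P"
    using nz by (simp add: P_def zeta_def field_simps)
  have "m0 a b = (2 * (b * (1 - a\<^sup>2) - a * (1 - b\<^sup>2))) / (2 * ((1 - a\<^sup>2) - (1 - b\<^sup>2)))"
    unfolding m0_def num den using P by simp
  also have "\<dots> = (2 * (b - a) * (1 + a * b)) / (2 * (b - a) * (a + b))"
    by (simp add: algebra_simps power2_eq_square)
  finally show ?thesis
    using assms by simp
qed

lemma DERIV_neg_off_countable_imp_le:
  fixes \<Psi> :: "real \<Rightarrow> real"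
  assumes "a < b" and cont: "continuous_on {a..b} \<Psi>" and "countable D"
    and der: "\<And>x. x \<in> {a<..<b} - D \<Longrightarrow> \<exists>d<0. (\<Psi> has_real_derivative d) (at x)"
  shows "\<Psi> b \<le> \<Psi> a"
proof (rule ccontr)
  assume "\<not> \<Psi> b \<le> \<Psi> a"
  then have "uncountable {\<Psi> a<..<\<Psi> b}"
    by (subst uncountable_open_interval) simp
  moreover have "countable (\<Psi> ` D)"
    using \<open>countable D\<close> by simp
  ultimately obtain y where y: "\<Psi> a < y" "y < \<Psi> b" "y \<notin> \<Psi> ` D"
    by (metis countable_subset greaterThanLessThan_iff subsetI)
  \<comment> \<open>the last point below level y; there \<Psi> crosses y upwards, contradicting \<Psi>' < 0\<close>
  define T where "T = {x \<in> {a..b}. \<Psi> x \<le> y}"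
  define s where "s = Sup T"
  have "closed T"
    using continuous_closed_preimage[OF cont closed_atLeastAtMost, of "{..y}"]
    by (simp add: T_def vimage_def Int_def conj_commute)
  moreover have T: "bdd_above T" "a \<in> T"
    using \<open>a < b\<close> y by (auto simp: T_def intro: bdd_aboveI[of _ b])
  ultimately have "s \<in> T" and upper: "\<And>x. x \<in> T \<Longrightarrow> x \<le> s"
    unfolding s_def by (auto intro: closed_contains_Sup cSup_upper)
  then have s: "a \<le> s" "s \<le> b" "\<Psi> s \<le> y"
    by (auto simp: T_def)
  have "\<Psi> s = y"
  proof -
    have "continuous_on {s..b} \<Psi>"
      using cont s by (auto intro: continuous_on_subset)
    then obtain x where "s \<le> x" "x \<le> b" "\<Psi> x = y"
      using IVT'[of \<Psi> s y b] s y by auto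
    then show ?thesis
      using upper[of x] s by (auto simp: T_def)
  qed
  then have "s \<in> {a<..<b} - D"
    using s y by (auto simp: order.order_iff_strict)
  then obtain d where "d < 0" "(\<Psi> has_real_derivative d) (at s)"
    using der by blast
  then obtain e where "e > 0" and e: "\<And>h. 0 < h \<Longrightarrow> h < e \<Longrightarrow> \<Psi> (s + h) < \<Psi> s"
    using DERIV_neg_dec_right by blast
  define h where "h = min e (b - s) / 2"
  have "0 < h" "h < e" "s + h \<le> b"
    using \<open>e > 0\<close> \<open>s \<in> {a<..<b} - D\<close> by (auto simp: h_def min_def field_simps)
  then have "s + h \<in> T"
    using e[of h] s \<open>\<Psi> s = y\<close> by (auto simp: T_def)
  then show False
    using upper \<open>0 < h\<close> by fastforce
qed

lemma DERIV_zero_off_countable_imp_eq: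
  fixes \<Phi> :: "real \<Rightarrow> real"
  assumes "a < b" and cont: "continuous_on {a..b} \<Phi>" and "countable D"
    and der: "\<And>x. x \<in> {a<..<b} - D \<Longrightarrow> (\<Phi> has_real_derivative 0) (at x)"
  shows "\<Phi> b = \<Phi> a"
proof -
  have le: "\<sigma> * \<Phi> b \<le> \<sigma> * \<Phi> a + e" if "e > 0" for \<sigma> e
  proof -
    define \<Psi> where "\<Psi> x = \<sigma> * \<Phi> x - e / (b - a) * (x - a)" for x
    have "\<Psi> b \<le> \<Psi> a"
    proof (rule DERIV_neg_off_countable_imp_le[OF \<open>a < b\<close> _ \<open>countable D\<close>])
      show "continuous_on {a..b} \<Psi>"
        unfolding \<Psi>_def by (intro continuous_intros cont)
      show "\<exists>d<0. (\<Psi> has_real_derivative d) (at x)" if "x \<in> {a<..<b} - D" for x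
      proof (intro exI conjI)
        show "(\<Psi> has_real_derivative - e / (b - a)) (at x)"
          unfolding \<Psi>_def using \<open>a < b\<close> by (auto intro!: derivative_eq_intros der[OF that])
        show "- e / (b - a) < 0"
          using \<open>e > 0\<close> \<open>a < b\<close> by simp
      qed
    qed
    then show ?thesis
      using \<open>a < b\<close> by (simp add: \<Psi>_def)
  qed
  show ?thesis
    using field_le_epsilon[OF le[where \<sigma>=1]] field_le_epsilon[OF le[where \<sigma>="-1"]] by simp
qed

lemma integral_has_real_derivative_at:
  fixes f :: "real \<Rightarrow> real"
  assumes "f integrable_on {a..b}" "x \<in> {a<..<b}" "isCont f x"
  shows "((\<lambda>u. integral {a..u} f) has_real_derivative f x) (at x)"
proof -
  have "((\<lambda>u. integral {a..u} f) has_vector_derivative f x) (at x within {a..b} - {})"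
    using assms by (intro integral_has_vector_derivative_continuous_at)
      (auto intro: continuous_at_imp_continuous_within)
  moreover have "at x within {a..b} = at x"
    using assms(2) by (intro at_within_interior) auto
  ultimately show ?thesis
    by (simp add: has_real_derivative_iff_has_vector_derivative)
qed

lemma fundamental_theorem_of_calculus_countable:
  fixes F f :: "real \<Rightarrow> real"
  assumes "a < b" and "continuous_on {a..b} F" and "countable D"
    and "f integrable_on {a..b}"
    and "\<And>x. x \<in> {a<..<b} - D \<Longrightarrow> (F has_real_derivative f x) (at x)"
    and "\<And>x. x \<in> {a<..<b} - D \<Longrightarrow> isCont f x"
  shows "integral {a..b} f = F b - F a"
proof -
  have "(\<lambda>x. F x - integral {a..x} f) b = (\<lambda>x. F x - integral {a..x} f) a"
  proof (rule DERIV_zero_off_countable_imp_eq[OF \<open>a < b\<close> _ \<open>countable D\<close>])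
    show "continuous_on {a..b} (\<lambda>x. F x - integral {a..x} f)"
      using assms by (intro continuous_intros indefinite_integral_continuous_1)
    show "((\<lambda>x. F x - integral {a..x} f) has_real_derivative 0) (at x)"
      if "x \<in> {a<..<b} - D" for x
    proof -
      have "((\<lambda>x. integral {a..x} f) has_real_derivative f x) (at x)"
        using assms(4,6) that by (intro integral_has_real_derivative_at) auto
      then show ?thesis
        using DERIV_diff[OF assms(5)[OF that]] by fastforce
    qed
  qed
  then show ?thesis
    by simp
qed

lemma mono_on_tendsto_at_left_Sup:
  fixes f :: "real \<Rightarrow> real"
  assumes "mono_on {a..b} f" "a < b"
  shows "(f \<longlongrightarrow> Sup (f ` {a..<b})) (at_left b)"
proof -
  have bdd: "bdd_above (f ` {a..<b})"
    using assms by (intro bdd_aboveI[of _ "f b"]) (auto intro: mono_onD)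
  have nonempty: "f ` {a..<b} \<noteq> {}"
    using assms by simp
  show ?thesis
  proof (rule order_tendstoI)
    fix y assume "y < Sup (f ` {a..<b})"
    then obtain t where t: "t \<in> {a..<b}" "y < f t"
      using less_cSup_iff[OF nonempty bdd] by auto
    have "eventually (\<lambda>x. x \<in> {t<..<b}) (at_left b)"
      using t by (intro eventually_at_left_real) auto
    then show "eventually (\<lambda>x. y < f x) (at_left b)"
    proof eventually_elim
      case (elim x)
      then have "f t \<le> f x"
        using t by (intro mono_onD[OF assms(1)]) auto
      then show ?case
        using t by simp
    qed
  next
    fix y assume "Sup (f ` {a..<b}) < y"
    have "eventually (\<lambda>x. x \<in> {a<..<b}) (at_left b)"
      using assms by (intro eventually_at_left_real)
    then show "eventually (\<lambda>x. f x < y) (at_left b)"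
    proof eventually_elim
      case (elim x)
      then have "f x \<le> Sup (f ` {a..<b})"
        using bdd by (intro cSup_upper) auto
      then show ?case
        using \<open>Sup (f ` {a..<b}) < y\<close> by simp
    qed
  qed
qed

lemma integrable_continuous_mult_nonneg:
  fixes c f :: "real \<Rightarrow> real"
  assumes "continuous_on {a..b} c" "f integrable_on {a..b}" "\<And>x. x \<in> {a..b} \<Longrightarrow> 0 \<le> f x"
  shows "(\<lambda>x. c x * f x) integrable_on {a..b}"
proof -
  have "f absolutely_integrable_on {a..b}"
    using assms(2,3) absolutely_integrable_on_iff_nonneg by blast
  moreover have "c \<in> borel_measurable (lebesgue_on {a..b})"
    using assms(1) by (intro continuous_imp_measurable_on_sets_lebesgue) auto
  moreover have "bounded (c ` {a..b})"
    using compact_continuous_image[OF assms(1)] compact_imp_bounded by auto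
  ultimately have "(\<lambda>x. c x * f x) absolutely_integrable_on {a..b}"
    by (intro absolutely_integrable_bounded_measurable_product_real) auto
  then show ?thesis
    using absolutely_integrable_on_def by blast
qed

text \<open>The derivative of \<open>x \<zeta>(x) - m(a,b) \<zeta>(x)\<close>.\<close>
definition zeta_kernel :: "real \<Rightarrow> real \<Rightarrow> real \<Rightarrow> real" where
  "zeta_kernel a b x = zeta x + x * (x * (zeta x)\<^sup>2) - m0 a b * (x * (zeta x)\<^sup>2)"

lemma zeta_kernel_eq:
  assumes "\<bar>x\<bar> < 1"
  shows "zeta_kernel a b x = (zeta x)\<^sup>2 / 2 * (x\<^sup>2 - 2 * m0 a b * x + 1)"
proof -
  have "zeta x = (zeta x)\<^sup>2 / 2 * (1 - x\<^sup>2)"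
    using zeta_mult_one_minus_square[OF assms] by (simp add: power2_eq_square)
  then show ?thesis
    unfolding zeta_kernel_def by (simp add: algebra_simps power2_eq_square)
qed

lemma integral_zeta_kernel:
  assumes "0 \<le> a" "a < b" "b < 1"
  shows "integral {a..b} (zeta_kernel a b) = 0"
proof -
  define U where "U x = x * zeta x - m0 a b * zeta x" for x
  have "(zeta_kernel a b has_integral U b - U a) {a..b}"
  proof (rule fundamental_theorem_of_calculus)
    fix x assume "x \<in> {a..b}"
    then have "(zeta has_real_derivative x * (zeta x)\<^sup>2) (at x)"
      using assms by (intro has_real_derivative_zeta) auto
    then have "(U has_real_derivative zeta_kernel a b x) (at x)"
      unfolding U_def zeta_kernel_def by (auto intro!: derivative_eq_intros)
    then show "(U has_vector_derivative zeta_kernel a b x) (at x within {a..b})"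
      by (simp add: has_real_derivative_iff_has_vector_derivative has_vector_derivative_at_within)
  qed (use assms in simp)
  moreover have "m0 a b * (zeta b - zeta a) = b * zeta b - a * zeta a"
    using zeta_strict_mono[of a b] assms by (simp add: m0_def)
  then have "U b - U a = 0"
    by (simp add: U_def algebra_simps)
  ultimately show ?thesis
    by (simp add: integral_unique)
qed

lemma zeta_kernel_sign_change:
  assumes "0 \<le> a" "a < b" "b < 1"
  obtains c where "c \<in> {a<..<b}" "\<And>x. x \<in> {a..b} \<Longrightarrow> (x - c) * zeta_kernel a b x \<le> 0"
    and "zeta_kernel a b b < 0"
proof -
  define M where "M = m0 a b"
  define q where "q x = x\<^sup>2 - 2 * M * x + 1" for x
  have M: "M * (a + b) = 1 + a * b"
    using assms by (simp add: M_def m0_eq)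
  have q: "(a + b) * q x = (a + b) * (x\<^sup>2 + 1) - 2 * x * (1 + a * b)" for x
    unfolding q_def M[symmetric] by (simp add: algebra_simps)
  have "(a + b) * q a = (b - a) * (1 - a\<^sup>2)" "(a + b) * q b = - ((b - a) * (1 - b\<^sup>2))"
    unfolding q by (simp_all add: algebra_simps power2_eq_square)
  moreover have "a\<^sup>2 < 1" "b\<^sup>2 < 1"
    using assms power_strict_mono[of a 1 2] power_strict_mono[of b 1 2] by auto
  ultimately have "0 < (a + b) * q a" "(a + b) * q b < 0"
    using assms by simp_all
  then have qa: "q a > 0" and qb: "q b < 0"
    using assms by (simp_all add: zero_less_mult_iff mult_less_0_iff)
  obtain c where c: "a \<le> c" "c \<le> b" "q c = 0"
    using IVT2[of q b 0 a] qa qb assms unfolding q_def by (auto intro!: continuous_intros)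
  then have "c \<in> {a<..<b}"
    using qa qb by (auto simp: order.order_iff_strict)
  then have "0 < c" "c < 1"
    using assms by auto
  \<comment> \<open>the roots of q multiply to 1, so the other root 1/c lies beyond 1\<close>
  then have M2: "2 * M = c + 1 / c"
    using c(3) by (simp add: q_def field_simps power2_eq_square)
  have q_factor: "q x = (x - c) * (x - 1 / c)" for x
    unfolding q_def M2 using \<open>0 < c\<close> by (simp add: field_simps power2_eq_square)
  show ?thesis
  proof
    show "c \<in> {a<..<b}"
      by fact
    fix x assume x: "x \<in> {a..b}"
    have "x < 1 / c"
      using x assms \<open>0 < c\<close> \<open>c < 1\<close> mult_strict_mono'[of c 1 x 1] by (auto simp: field_simps)
    then have "(x - c) * q x \<le> 0"
      using mult_nonneg_nonpos[of "(x - c)\<^sup>2" "x - 1 / c"]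
      by (simp add: q_factor power2_eq_square mult.assoc)
    moreover have "(x - c) * zeta_kernel a b x = (zeta x)\<^sup>2 / 2 * ((x - c) * q x)"
      using x assms by (simp add: zeta_kernel_eq q_def M_def)
    ultimately show "(x - c) * zeta_kernel a b x \<le> 0"
      by (metis mult_nonneg_nonpos zero_le_divide_iff zero_le_numeral zero_le_power2)
  next
    have "0 < zeta b"
      using assms by (intro zeta_pos) auto
    then show "zeta_kernel a b b < 0"
      using qb assms by (simp add: zeta_kernel_eq q_def M_def mult_pos_neg)
  qed
qed

lemma integral_zeta_kernel_mult_mono:
  fixes \<psi> :: "real \<Rightarrow> real"
  assumes "0 \<le> a" "a < b" "b < 1" and "continuous_on {a..b} \<psi>" and "mono_on {a..b} \<psi>"
  shows integral_zeta_kernel_mult_mono_le: "integral {a..b} (\<lambda>x. zeta_kernel a b x * \<psi> x) \<le> 0"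
    and integral_zeta_kernel_mult_mono_less:
      "(\<And>t. t \<in> {a..<b} \<Longrightarrow> \<psi> t < \<psi> b) \<Longrightarrow> integral {a..b} (\<lambda>x. zeta_kernel a b x * \<psi> x) < 0"
proof -
  obtain c where c: "c \<in> {a<..<b}" and sign: "\<And>x. x \<in> {a..b} \<Longrightarrow> (x - c) * zeta_kernel a b x \<le> 0"
    and "zeta_kernel a b b < 0"
    using zeta_kernel_sign_change assms(1-3) by blast
  define \<phi> where "\<phi> x = zeta_kernel a b x * (\<psi> x - \<psi> c)" for x
  have "continuous_on {a..b} (zeta_kernel a b)"
    unfolding zeta_kernel_def using assms by (intro continuous_intros continuous_on_zeta)
  then have cont: "continuous_on {a..b} \<phi>"
    unfolding \<phi>_def using assms(4) by (intro continuous_intros)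
  have \<phi>_nonpos: "\<phi> x \<le> 0" if "x \<in> {a..b}" for x
  proof (cases x c rule: linorder_cases)
    case less
    then have "0 \<le> zeta_kernel a b x" "\<psi> x \<le> \<psi> c"
      using sign[OF that] c that by (auto simp: mult_le_0_iff intro: mono_onD[OF assms(5)])
    then show ?thesis
      by (simp add: \<phi>_def mult_nonneg_nonpos)
  next
    case greater
    then have "zeta_kernel a b x \<le> 0" "\<psi> c \<le> \<psi> x"
      using sign[OF that] c that by (auto simp: mult_le_0_iff intro: mono_onD[OF assms(5)])
    then show ?thesis
      by (simp add: \<phi>_def mult_nonpos_nonneg)
  qed (simp add: \<phi>_def)
  have "integral {a..b} (\<lambda>x. zeta_kernel a b x * \<psi> x)
      = integral {a..b} (\<lambda>x. \<phi> x + \<psi> c * zeta_kernel a b x)"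
    by (simp add: \<phi>_def algebra_simps)
  also have "\<dots> = integral {a..b} \<phi> + \<psi> c * integral {a..b} (zeta_kernel a b)"
    using integrable_continuous_interval[OF cont]
      integrable_continuous_interval[OF \<open>continuous_on {a..b} (zeta_kernel a b)\<close>]
    by (subst integral_add) (auto intro: integrable_on_mult_right)
  also have "\<dots> = integral {a..b} \<phi>"
    using integral_zeta_kernel[OF assms(1-3)] by simp
  finally have eq: "integral {a..b} (\<lambda>x. zeta_kernel a b x * \<psi> x) = integral {a..b} \<phi>" .
  show "integral {a..b} (\<lambda>x. zeta_kernel a b x * \<psi> x) \<le> 0"
    unfolding eq using integral_le[OF integrable_continuous_interval[OF cont] integrable_0] \<phi>_nonpos
    by simp
  show "integral {a..b} (\<lambda>x. zeta_kernel a b x * \<psi> x) < 0"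
    if "\<And>t. t \<in> {a..<b} \<Longrightarrow> \<psi> t < \<psi> b"
  proof -
    have "\<phi> b < 0"
      using that[of c] c \<open>zeta_kernel a b b < 0\<close> by (simp add: \<phi>_def mult_neg_pos)
    moreover have "continuous_on {a..b} (\<lambda>x. - \<phi> x)"
      using cont by (intro continuous_intros)
    ultimately have "integral {a..b} (\<lambda>x. - \<phi> x) \<noteq> 0"
      using integral_eq_0_iff[of a b "\<lambda>x. - \<phi> x"] \<phi>_nonpos assms by fastforce
    then show ?thesis
      using \<open>integral {a..b} (\<lambda>x. zeta_kernel a b x * \<psi> x) \<le> 0\<close> eq by simp
  qed
qed

locale monotone_ratio_weight =
  fixes rho :: "real \<Rightarrow> real" and a b :: real
  assumes a_nonneg: "0 \<le> a" and a_less_b: "a < b" and b_less_1: "b < 1"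
    and rho_nonneg: "\<And>t. t \<in> {a..b} \<Longrightarrow> 0 \<le> rho t"
    and ratio_mono: "mono_on {a..b} (\<lambda>t. rho t / zeta t)"
begin

definition h :: "real \<Rightarrow> real" where
  "h x = integral {a..x} rho"

definition psi :: "real \<Rightarrow> real" where
  "psi x = exp (h x)"

definition f :: "real \<Rightarrow> real" where
  "f x = x * (zeta x)\<^sup>2 * psi x"

definition g :: "real \<Rightarrow> real" where
  "g x = x * zeta x * psi x"

lemma m_rho_eq: "m_rho rho a b = (g b - g a) / integral {a..b} f"
  unfolding m_rho_def Let_def g_def f_def[abs_def] psi_def h_def ..

lemma zeta_pos_ab: "t \<in> {a..b} \<Longrightarrow> 0 < zeta t"
  using a_nonneg b_less_1 by (intro zeta_pos) auto

lemma continuous_on_zeta_ab: "continuous_on {a..b} zeta"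
  using a_nonneg b_less_1 by (rule continuous_on_zeta)

lemma ratio_nonneg: "t \<in> {a..b} \<Longrightarrow> 0 \<le> rho t / zeta t"
  using rho_nonneg zeta_pos_ab by (simp add: less_imp_le)

lemma rho_mono: "mono_on {a..b} rho"
proof (rule mono_onI)
  fix x y assume xy: "x \<in> {a..b}" "y \<in> {a..b}" "x \<le> y"
  have "rho x = zeta x * (rho x / zeta x)"
    using zeta_pos_ab[OF xy(1)] by simp
  also have "\<dots> \<le> zeta y * (rho y / zeta y)"
    using xy a_nonneg b_less_1 ratio_nonneg[OF xy(1)] zeta_pos_ab[OF xy(2)]
    by (intro mult_mono zeta_mono mono_onD[OF ratio_mono]) auto
  also have "\<dots> = rho y"
    using zeta_pos_ab[OF xy(2)] by simp
  finally show "rho x \<le> rho y" .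
qed

lemma rho_integrable: "rho integrable_on {x..y}" if "a \<le> x" "y \<le> b"
  by (rule integrable_on_subinterval[OF integrable_on_mono_on[OF rho_mono]]) (use that in auto)

lemma h_diff: "h y - h x = integral {x..y} rho" if "a \<le> x" "x \<le> y" "y \<le> b"
  using Henstock_Kurzweil_Integration.integral_combine[OF that(1,2) rho_integrable[of a y]] that
  by (simp add: h_def)

lemma h_mono: "h x \<le> h y" if "a \<le> x" "x \<le> y" "y \<le> b"
proof -
  have "0 \<le> integral {x..y} rho"
    by (rule integral_nonneg[OF rho_integrable]) (use that rho_nonneg in auto)
  then show ?thesis
    using h_diff[OF that] by simp
qed

lemma psi_mono: "mono_on {a..b} psi"
  by (intro mono_onI) (auto simp: psi_def intro: h_mono)

lemma continuous_on_psi: "continuous_on {a..b} psi"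
  unfolding psi_def h_def
  by (intro continuous_intros indefinite_integral_continuous_1 rho_integrable) auto

lemma psi_less_psi_b:
  assumes "t0 \<in> {a..<b}" "rho t0 \<noteq> 0" and "t \<in> {a..<b}"
  shows "psi t < psi b"
proof -
  define s where "s = max t t0"
  have s: "a \<le> s" "t \<le> s" "s < b"
    using assms by (auto simp: s_def)
  have "0 < rho t0"
    using assms rho_nonneg[of t0] by auto
  have "(b - s) * rho t0 = integral {s..b} (\<lambda>_. rho t0)"
    using s by simp
  also have "\<dots> \<le> integral {s..b} rho"
    using s assms by (intro integral_le rho_integrable mono_onD[OF rho_mono]) (auto simp: s_def)
  also have "\<dots> = h b - h s"
    using s by (simp add: h_diff)
  finally have "h s < h b"
    using s \<open>0 < rho t0\<close> mult_pos_pos[of "b - s" "rho t0"] by linarith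
  moreover have "h t \<le> h s"
    using s assms by (intro h_mono) auto
  ultimately show ?thesis
    by (simp add: psi_def)
qed

lemma continuous_on_f: "continuous_on {a..b} f"
  unfolding f_def[abs_def] by (intro continuous_intros continuous_on_zeta_ab continuous_on_psi)

lemma f_nonneg: "x \<in> {a..b} \<Longrightarrow> 0 \<le> f x"
  using a_nonneg by (simp add: f_def psi_def)

lemma integral_f_pos: "0 < integral {a..b} f"
proof -
  have "0 < f b"
    using a_nonneg a_less_b zeta_pos_ab[of b] by (simp add: f_def psi_def)
  then have "integral {a..b} f \<noteq> 0"
    using integral_eq_0_iff[OF continuous_on_f a_less_b f_nonneg] a_less_b by fastforce
  then show ?thesis
    using integral_nonneg[OF integrable_continuous_interval[OF continuous_on_f] f_nonneg]
    by simp
qed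

lemma g_increment:
  "g b - g a = integral {a..b} (\<lambda>x. zeta_kernel a b x * psi x) + m0 a b * integral {a..b} f
     + integral {a..b} (\<lambda>x. f x * (rho x / zeta x))"
proof -
  define D where "D = {x \<in> {a<..<b}. \<not> isCont rho x}"
  have "countable D"
    unfolding D_def using rho_mono
    by (intro mono_on_ctble_discont_open) (auto intro: mono_on_subset)
  have kernel_cont: "continuous_on {a..b} (zeta_kernel a b)"
    unfolding zeta_kernel_def[abs_def] by (intro continuous_intros continuous_on_zeta_ab)
  have int1: "(\<lambda>x. zeta_kernel a b x * psi x) integrable_on {a..b}"
    by (intro integrable_continuous_interval continuous_intros kernel_cont continuous_on_psi)
  have int2: "(\<lambda>x. m0 a b * f x) integrable_on {a..b}"
    by (intro integrable_continuous_interval continuous_intros continuous_on_f)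
  have int3: "(\<lambda>x. f x * (rho x / zeta x)) integrable_on {a..b}"
    by (intro integrable_continuous_mult_nonneg continuous_on_f integrable_on_mono_on ratio_mono
        ratio_nonneg)
  have "integral {a..b} (\<lambda>x. zeta_kernel a b x * psi x + m0 a b * f x + f x * (rho x / zeta x))
      = g b - g a"
  proof (rule fundamental_theorem_of_calculus_countable[OF a_less_b _ \<open>countable D\<close>])
    show "continuous_on {a..b} g"
      unfolding g_def[abs_def] by (intro continuous_intros continuous_on_zeta_ab continuous_on_psi)
    show "(\<lambda>x. zeta_kernel a b x * psi x + m0 a b * f x + f x * (rho x / zeta x)) integrable_on {a..b}"
      by (intro integrable_add int1 int2 int3)
  next
    fix x assume x: "x \<in> {a<..<b} - D"
    then have "isCont rho x" and "\<bar>x\<bar> < 1" and "zeta x \<noteq> 0"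
      using a_nonneg b_less_1 zeta_pos_ab[of x] by (auto simp: D_def)
    have zeta': "(zeta has_real_derivative x * (zeta x)\<^sup>2) (at x)"
      using \<open>\<bar>x\<bar> < 1\<close> by (rule has_real_derivative_zeta)
    have h': "(h has_real_derivative rho x) (at x)"
      unfolding h_def[abs_def]
      using rho_integrable[of a b] x \<open>isCont rho x\<close> by (intro integral_has_real_derivative_at) auto
    show "(g has_real_derivative
        zeta_kernel a b x * psi x + m0 a b * f x + f x * (rho x / zeta x)) (at x)"
      unfolding g_def[abs_def] psi_def[abs_def] f_def zeta_kernel_def
      using \<open>zeta x \<noteq> 0\<close>
      by (auto intro!: derivative_eq_intros zeta' h' simp: field_simps power2_eq_square)
    have "isCont zeta x" "isCont h x"
      using DERIV_isCont zeta' h' by blast+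
    then show "isCont (\<lambda>x. zeta_kernel a b x * psi x + m0 a b * f x + f x * (rho x / zeta x)) x"
      unfolding zeta_kernel_def psi_def[abs_def] f_def[abs_def]
      using \<open>zeta x \<noteq> 0\<close> \<open>isCont rho x\<close> by (intro continuous_intros) auto
  qed
  then show ?thesis
    using int1 int2 int3 by (simp add: integral_add integrable_add)
qed

lemma Lim_ratio_eq_Sup:
  "Lim (at_left b) (\<lambda>t. rho t / zeta t) = Sup ((\<lambda>t. rho t / zeta t) ` {a..<b})"
  using mono_on_tendsto_at_left_Sup[OF ratio_mono a_less_b] by (intro tendsto_Lim) auto

lemma ratio_le_Lim: "t \<in> {a..<b} \<Longrightarrow> rho t / zeta t \<le> Lim (at_left b) (\<lambda>t. rho t / zeta t)"
  unfolding Lim_ratio_eq_Sup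
  by (rule cSup_upper) (auto intro!: bdd_aboveI[of _ "rho b / zeta b"] mono_onD[OF ratio_mono])

lemma integral_f_ratio_le:
  "integral {a..b} (\<lambda>x. f x * (rho x / zeta x))
     \<le> Lim (at_left b) (\<lambda>t. rho t / zeta t) * integral {a..b} f"
proof -
  define L where "L = Lim (at_left b) (\<lambda>t. rho t / zeta t)"
  \<comment> \<open>the bound by L may fail at the single point b\<close>
  have spike: "f x * (rho x / zeta x) = f x * min (rho x / zeta x) L" if "x \<in> {a..b} - {b}" for x
    using ratio_le_Lim[of x] that by (simp add: L_def min_def)
  have "(\<lambda>x. f x * (rho x / zeta x)) integrable_on {a..b}"
    by (intro integrable_continuous_mult_nonneg continuous_on_f integrable_on_mono_on ratio_mono
        ratio_nonneg)
  then have "(\<lambda>x. f x * min (rho x / zeta x) L) integrable_on {a..b}"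
    by (rule integrable_spike[where S = "{b}"]) (use spike in auto)
  then have "integral {a..b} (\<lambda>x. f x * min (rho x / zeta x) L) \<le> integral {a..b} (\<lambda>x. L * f x)"
    using f_nonneg integrable_continuous_interval[OF continuous_on_f]
    by (intro integral_le integrable_on_mult_right)
      (auto simp: mult.commute[of L] intro: mult_left_mono)
  moreover have "integral {a..b} (\<lambda>x. f x * (rho x / zeta x))
      = integral {a..b} (\<lambda>x. f x * min (rho x / zeta x) L)"
    by (rule integral_spike[where S = "{b}"]) (use spike in auto)
  ultimately show ?thesis
    by (simp add: L_def)
qed

lemma m_rho_le: "m_rho rho a b \<le> Lim (at_left b) (\<lambda>t. rho t / zeta t) + m0 a b"
proof -
  have "integral {a..b} (\<lambda>x. zeta_kernel a b x * psi x) \<le> 0"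
    using a_nonneg a_less_b b_less_1 continuous_on_psi psi_mono
    by (rule integral_zeta_kernel_mult_mono_le)
  then have "g b - g a \<le> (Lim (at_left b) (\<lambda>t. rho t / zeta t) + m0 a b) * integral {a..b} f"
    using g_increment integral_f_ratio_le by (simp add: algebra_simps)
  then show ?thesis
    using integral_f_pos by (simp add: m_rho_eq pos_divide_le_eq)
qed

lemma m_rho_less:
  assumes "t0 \<in> {a..<b}" "rho t0 \<noteq> 0"
  shows "m_rho rho a b < Lim (at_left b) (\<lambda>t. rho t / zeta t) + m0 a b"
proof -
  have "integral {a..b} (\<lambda>x. zeta_kernel a b x * psi x) < 0"
    using a_nonneg a_less_b b_less_1 continuous_on_psi psi_mono
    by (rule integral_zeta_kernel_mult_mono_less) (rule psi_less_psi_b[OF assms])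
  then have "g b - g a < (Lim (at_left b) (\<lambda>t. rho t / zeta t) + m0 a b) * integral {a..b} f"
    using g_increment integral_f_ratio_le by (simp add: algebra_simps)
  then show ?thesis
    using integral_f_pos by (simp add: m_rho_eq pos_divide_less_eq)
qed

lemma m_rho_eq_if_vanishing:
  assumes "\<And>t. t \<in> {a..<b} \<Longrightarrow> rho t = 0"
  shows "m_rho rho a b = Lim (at_left b) (\<lambda>t. rho t / zeta t) + m0 a b"
proof -
  have "(\<lambda>t. rho t / zeta t) ` {a..<b} = {0}"
    using assms a_less_b by force
  then have "Lim (at_left b) (\<lambda>t. rho t / zeta t) = 0"
    by (simp add: Lim_ratio_eq_Sup)
  moreover have "psi x = 1" if "x \<in> {a..b}" for x
  proof -
    have "integral {a..x} rho = integral {a..x} (\<lambda>_. 0)"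
      by (rule integral_spike[where S = "{b}"]) (use assms that in auto)
    then show ?thesis
      by (simp add: psi_def h_def)
  qed
  then have "integral {a..b} (\<lambda>x. zeta_kernel a b x * psi x) = integral {a..b} (zeta_kernel a b)"
    by (intro integral_cong) simp
  then have "integral {a..b} (\<lambda>x. zeta_kernel a b x * psi x) = 0"
    using integral_zeta_kernel[OF a_nonneg a_less_b b_less_1] by simp
  moreover have "integral {a..b} (\<lambda>x. f x * (rho x / zeta x)) = integral {a..b} (\<lambda>_. 0)"
    by (rule integral_spike[where S = "{b}"]) (use assms in auto)
  ultimately show ?thesis
    using g_increment integral_f_pos by (simp add: m_rho_eq)
qed

end

theorem mainTheorem9:
  fixes rho :: "real \<Rightarrow> real" and a b :: real
  assumes "0 \<le> a" and "a < b" and "b < 1"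
    and "\<forall>t\<in>{a..b}. 0 \<le> rho t"
    and "bounded (rho ` {a..b})"
    and "mono_on {a..b} (\<lambda>t. rho t / zeta t)"
  shows "m_rho rho a b \<le> Lim (at_left b) (\<lambda>t. rho t / zeta t) + m0 a b
     \<and> (m_rho rho a b = Lim (at_left b) (\<lambda>t. rho t / zeta t) + m0 a b
          \<longleftrightarrow> (\<forall>t\<in>{a..<b}. rho t = 0))"
proof -
  interpret monotone_ratio_weight rho a b
    using assms by unfold_locales auto
  have "m_rho rho a b = Lim (at_left b) (\<lambda>t. rho t / zeta t) + m0 a b
      \<longleftrightarrow> (\<forall>t\<in>{a..<b}. rho t = 0)"
    using m_rho_less m_rho_eq_if_vanishing by fastforce
  with m_rho_le show ?thesis
    by blast
qed

end
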